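(* Let $0<\lambda\le\Lambda$. There exist $\alpha,r_0,\delta\in(0,1)$, depending only on $\lambda,\Lambda,N$, such that for every $r\in(0,r_0]$ and every kernel $K\in L^\infty(\Omega\times B_1)$ with $\lambda\le K\le\Lambda$ on $\Omega\times B_1$, where $\Omega\supseteq B_{r+r^2}\setminus\overline{B_r}$, the function $\varphi(x):=\ell^\alpha((|x|-r)_+)$ satisfies $L_K\varphi(x)\ge\delta$ for every $x\in B_{r+r^2}$ with $|x|>r$.
   Context: $\ell(\rho):=|\ln(\min\{\rho,1/10\})|^{-1}$ for $\rho>0$ and $\ell(0):=0$. $L_K\varphi(x):=\int_{B_1(x)}\frac{\varphi(x)-\varphi(y)}{|y-x|^N}K(x,y-x)\,dy$. $B_r$ is the open ball of radius $r$ centered at $0$. *)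

theory Defs
  imports "HOL-Analysis.Analysis"
begin

definition ell :: "real \<Rightarrow> real" where
  "ell \<rho> = (if \<rho> > 0 then 1 / \<bar>ln (min \<rho> (1/10))\<bar> else 0)"

definition LK :: "('a::euclidean_space \<Rightarrow> 'a \<Rightarrow> real) \<Rightarrow> ('a \<Rightarrow> real) \<Rightarrow> 'a \<Rightarrow> real" where
  "LK K \<phi> x = (LINT y : ball x 1 | lborel.
      (\<phi> x - \<phi> y) / norm (y - x) ^ DIM('a) * K x (y - x))"

end

theory Submission
  imports Defs
begin

text \<open>Write \<rho> = |x| - r and a = |ln \<rho>|, so that \<phi>(x) = a^(-\<alpha>). On the inner side of the
  sphere, the balls of radius 4^k \<rho> centred at distance 2 \<cdot> 4^k \<rho> from x are pairwise
  disjoint, lie in B_r (where \<phi> vanishes) as long as k \<le> a/12, and each contributes at least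
  \<lambda> \<phi>(x) |B_1| / 3^N to L_K \<phi>(x); together they give a positive part of order
  a \<cdot> a^(-\<alpha>) = a^(1-\<alpha>).
  The negative part comes from points with \<phi>(y) > \<phi>(x) and is estimated on the dyadic
  shells 2^(-k-1) \<le> |y - x| < 2^(-k): for 2^(-k) < \<rho> the increment of \<phi> is at most
  2^(-k) / (\<rho> a), and for 2^(-k) \<ge> \<rho> it is at most 9 \<alpha> a^(1/2-\<alpha>) / \<surd>(k+1). Weighted with
  the shell volumes this sums to O(\<alpha> a^(1-\<alpha>) + 1/a). Choosing \<alpha> small, and then r_0 small so
  that a > 2 |ln r_0| is large, the positive part wins by a margin depending only on \<lambda>, \<Lambda>, N.\<close>

definition ell_powr :: "real \<Rightarrow> real \<Rightarrow> real" where
  "ell_powr \<alpha> t = ell (max t 0) powr \<alpha>"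

lemma ln_2_ge_half: "1/2 \<le> ln (2::real)"
  using ln2_ge_two_thirds by simp

lemma ln_10_ge_1: "1 \<le> ln (10::real)"
  using ln_ge_iff[of 10 1] exp_le by auto

lemma neg_ln_min_tenth_ge_1:
  assumes "0 < (t::real)"
  shows "1 \<le> - ln (min t (1/10))"
proof -
  have "ln (min t (1/10)) \<le> ln (1/10)" using assms by (subst ln_le_cancel_iff) auto
  then show ?thesis using ln_10_ge_1 by (simp add: ln_div)
qed

lemma powr_neg_le_1: "1 \<le> (b::real) \<Longrightarrow> 0 \<le> \<alpha> \<Longrightarrow> b powr (- \<alpha>) \<le> 1"
  using powr_mono[of "-\<alpha>" 0 b] by simp

lemma ell_pos_eq: "0 < t \<Longrightarrow> ell t = 1 / (- ln (min t (1/10)))"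
  using ln_less_zero[of "min t (1/10)"] by (simp add: ell_def)

lemma ell_powr_eq:
  assumes t: "0 < t"
  shows "ell_powr \<alpha> t = (- ln (min t (1/10))) powr (- \<alpha>)"
proof -
  define u where "u = - ln (min t (1/10))"
  have u: "0 < u" using neg_ln_min_tenth_ge_1[OF t] by (simp add: u_def)
  have "ell_powr \<alpha> t = (1 / u) powr \<alpha>" using t by (simp add: ell_powr_def ell_pos_eq u_def)
  also have "\<dots> = u powr (- \<alpha>)" using u by (simp add: powr_divide powr_minus_divide)
  finally show ?thesis by (simp add: u_def)
qed

lemma ell_powr_eq_0: "t \<le> 0 \<Longrightarrow> ell_powr \<alpha> t = 0"
  by (simp add: ell_powr_def ell_def)

lemma ell_powr_nonneg: "0 \<le> ell_powr \<alpha> t"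
  by (simp add: ell_powr_def)

lemma ell_powr_le_1:
  assumes "0 \<le> \<alpha>"
  shows "ell_powr \<alpha> t \<le> 1"
  using assms neg_ln_min_tenth_ge_1[of t]
  by (cases "t \<le> 0") (simp_all add: ell_powr_eq_0 ell_powr_eq powr_neg_le_1)

lemma mono_ell_powr: "0 \<le> \<alpha> \<Longrightarrow> mono (ell_powr \<alpha>)"
proof (rule monoI)
  fix s t :: real assume \<alpha>: "0 \<le> \<alpha>" and st: "s \<le> t"
  show "ell_powr \<alpha> s \<le> ell_powr \<alpha> t"
  proof (cases "s \<le> 0")
    case True
    then show ?thesis by (simp add: ell_powr_eq_0 ell_powr_nonneg)
  next
    case False
    then have "0 < s" "0 < t" using st by auto
    moreover have "- ln (min t (1/10)) \<le> - ln (min s (1/10))"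
      using \<open>0 < s\<close> st by (auto simp: min_def)
    ultimately show ?thesis
      using \<alpha> neg_ln_min_tenth_ge_1[of t] by (simp add: ell_powr_eq powr_mono2')
  qed
qed

lemma ell_powr_measurable: "0 \<le> \<alpha> \<Longrightarrow> ell_powr \<alpha> \<in> borel_measurable borel"
  by (rule borel_measurable_mono[OF mono_ell_powr])

lemma powr_neg_diff_le_1_minus_ratio:
  fixes a b \<alpha> :: real
  assumes "0 < \<alpha>" "\<alpha> \<le> 1" "1 \<le> b" "b \<le> a"
  shows "b powr (- \<alpha>) - a powr (- \<alpha>) \<le> 1 - b / a"
proof -
  have ab: "a powr (- \<alpha>) = b powr (- \<alpha>) * (b / a) powr \<alpha>"
    using assms by (simp add: powr_minus powr_divide field_simps)
  have q: "0 < b / a" "b / a \<le> 1" using assms by auto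
  have "b / a \<le> (b / a) powr \<alpha>"
    using powr_mono'[of \<alpha> 1 "b/a"] q assms by simp
  moreover have "(b / a) powr \<alpha> \<le> 1" using q assms by (simp add: powr_le1)
  moreover have "b powr (- \<alpha>) \<le> 1" using assms by (auto simp: powr_neg_le_1)
  ultimately have "b powr (- \<alpha>) * (1 - (b / a) powr \<alpha>) \<le> 1 * (1 - b / a)"
    by (intro mult_mono) auto
  then show ?thesis by (simp add: ab algebra_simps)
qed

lemma powr_neg_diff_le_sqrt:
  fixes a b \<alpha> :: real
  assumes "0 < \<alpha>" "\<alpha> \<le> 1/4" "1 \<le> b" "b \<le> a"
  shows "b powr (- \<alpha>) - a powr (- \<alpha>) \<le> 4 * \<alpha> * a powr (1/2 - \<alpha>) / sqrt b"
proof -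
  define t where "t = a / b"
  have t1: "1 \<le> t" using assms by (simp add: t_def)
  have a_t: "a powr (- \<alpha>) = b powr (- \<alpha>) * (1/t) powr \<alpha>"
   and b_t: "b powr (- \<alpha>) = a powr (- \<alpha>) * t powr \<alpha>"
    using assms by (simp_all add: t_def powr_minus powr_divide field_simps)
  have "1 + \<alpha> * ln (1/t) \<le> (1/t) powr \<alpha>"
    using t1 exp_ge_add_one_self[of "\<alpha> * ln (1/t)"] by (simp add: powr_def)
  then have exp_bound: "1 - (1/t) powr \<alpha> \<le> \<alpha> * ln t" using t1 by (simp add: ln_div)
  have "ln (t powr (1/4)) \<le> t powr (1/4) - 1" using t1 by (intro ln_le_minus_one) simp
  then have ln_bound: "ln t \<le> 4 * t powr (1/4)" using t1 by simp
  have "t powr \<alpha> \<le> t powr (1/4)" using t1 assms by (intro powr_mono) auto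
  have "b powr (- \<alpha>) - a powr (- \<alpha>) = b powr (- \<alpha>) * (1 - (1/t) powr \<alpha>)"
    by (simp add: a_t algebra_simps)
  also have "\<dots> \<le> b powr (- \<alpha>) * (\<alpha> * ln t)" by (rule mult_left_mono[OF exp_bound]) simp
  also have "\<dots> = \<alpha> * a powr (- \<alpha>) * (t powr \<alpha> * ln t)" by (simp add: b_t)
  also have "\<dots> \<le> \<alpha> * a powr (- \<alpha>) * (t powr (1/4) * (4 * t powr (1/4)))"
    using assms t1 \<open>t powr \<alpha> \<le> t powr (1/4)\<close> ln_bound by (intro mult_left_mono mult_mono) auto
  also have "\<dots> = 4 * \<alpha> * (a powr (- \<alpha>) * a powr (1/2)) / sqrt b"
  proof -
    have "t powr (1/4) * (4 * t powr (1/4)) = 4 * t powr (1/2)" by (simp add: powr_add[symmetric])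
    moreover have "t powr (1/2) = a powr (1/2) / sqrt b"
      using t1 assms by (simp add: powr_half_sqrt t_def real_sqrt_divide)
    ultimately show ?thesis by simp
  qed
  also have "a powr (- \<alpha>) * a powr (1/2) = a powr (1/2 - \<alpha>)"
    by (simp add: powr_add[symmetric])
  finally show ?thesis .
qed

lemma ell_powr_diff_le_ln_ratio:
  assumes "0 < \<alpha>" "\<alpha> \<le> 1" "0 < u" "u \<le> v" "v \<le> 1/10"
  shows "ell_powr \<alpha> v - ell_powr \<alpha> u \<le> (ln v - ln u) / (- ln u)"
proof -
  have "ln v \<le> ln (1/10)" using assms by simp
  then have v1: "1 \<le> - ln v" using ln_10_ge_1 by (simp add: ln_div)
  have vu: "- ln v \<le> - ln u" using assms by simp
  have "ell_powr \<alpha> v - ell_powr \<alpha> u \<le> 1 - (- ln v) / (- ln u)"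
    using powr_neg_diff_le_1_minus_ratio[OF assms(1,2) v1 vu] assms
    by (simp add: ell_powr_eq min_def)
  also have "\<dots> = (ln v - ln u) / (- ln u)" using v1 vu by (simp add: field_simps)
  finally show ?thesis .
qed

lemma ell_powr_increment_le_linear:
  fixes \<rho> \<alpha> d :: real
  assumes "0 < \<alpha>" "\<alpha> \<le> 1" "0 < \<rho>" "2 * \<rho> \<le> 1/10" "0 \<le> d" "d \<le> \<rho>"
  shows "ell_powr \<alpha> (\<rho> + d) - ell_powr \<alpha> \<rho> \<le> d / (\<rho> * (- ln \<rho>))"
proof -
  have "0 < - ln \<rho>" using assms by simp
  have "1 + d / \<rho> = (\<rho> + d) / \<rho>" using assms by (simp add: field_simps)
  then have "ln (\<rho> + d) - ln \<rho> = ln (1 + d / \<rho>)" using assms by (simp add: ln_div)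
  also have "\<dots> \<le> d / \<rho>" using assms by (intro ln_add_one_self_le_self) auto
  finally have "(ln (\<rho> + d) - ln \<rho>) / (- ln \<rho>) \<le> (d / \<rho>) / (- ln \<rho>)"
    using \<open>0 < - ln \<rho>\<close> by (intro divide_right_mono) auto
  moreover have "ell_powr \<alpha> (\<rho> + d) - ell_powr \<alpha> \<rho> \<le> (ln (\<rho> + d) - ln \<rho>) / (- ln \<rho>)"
    using assms by (intro ell_powr_diff_le_ln_ratio) auto
  ultimately show ?thesis by simp
qed

lemma ell_powr_lipschitz_near:
  fixes \<rho> \<alpha> s :: real
  assumes "0 < \<alpha>" "\<alpha> \<le> 1" "0 < \<rho>" "2 * \<rho> \<le> 1/10" "\<bar>s - \<rho>\<bar> \<le> \<rho> / 2"
  shows "\<bar>ell_powr \<alpha> s - ell_powr \<alpha> \<rho>\<bar> \<le> 2 * \<bar>s - \<rho>\<bar> / \<rho>"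
proof -
  have ln_small: "1 \<le> - ln t" if "0 < t" "t \<le> 1/10" for t :: real
    using neg_ln_min_tenth_ge_1[of t] that by (simp add: min_absorb1)
  have step: "ell_powr \<alpha> v - ell_powr \<alpha> u \<le> (v - u) / u" if "0 < u" "u \<le> v" "v \<le> 1/10" for u v
  proof -
    have "ell_powr \<alpha> v - ell_powr \<alpha> u \<le> (ln v - ln u) / (- ln u)"
      using assms that by (intro ell_powr_diff_le_ln_ratio) auto
    also have "\<dots> \<le> ln v - ln u"
      using ln_small[of u] that divide_left_mono[of 1 "- ln u" "ln v - ln u"] by simp
    also have "\<dots> = ln (v / u)" using that by (simp add: ln_div)
    also have "\<dots> \<le> v / u - 1" using that by (intro ln_le_minus_one) auto
    also have "\<dots> = (v - u) / u" using that by (simp add: field_simps)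
    finally show ?thesis .
  qed
  show ?thesis
  proof (cases "\<rho> \<le> s")
    case True
    have "ell_powr \<alpha> \<rho> \<le> ell_powr \<alpha> s" using monoD[OF mono_ell_powr True] assms by simp
    then show ?thesis using step[of \<rho> s] True assms by (simp add: field_simps)
  next
    case False
    have "0 < s" using assms False by linarith
    have "ell_powr \<alpha> \<rho> - ell_powr \<alpha> s \<le> (\<rho> - s) / s" using step[of s \<rho>] False assms \<open>0 < s\<close> by simp
    also have "\<dots> \<le> (\<rho> - s) / (\<rho> / 2)" using False assms \<open>0 < s\<close> by (intro divide_left_mono) auto
    also have "\<dots> = 2 * \<bar>s - \<rho>\<bar> / \<rho>" using False by simp
    finally show ?thesis using monoD[OF mono_ell_powr, of \<alpha> s \<rho>] False assms by simp
  qed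
qed

lemma neg_ln_min_dyadic_ge: "(real k + 1) / 5 \<le> - ln (min (2 * (1/2)^k) (1/10))"
proof (cases "k \<le> 4")
  case False
  have "ln (min (2 * (1/2)^k) (1/10)) \<le> ln (2 * (1/2::real)^k)" by (subst ln_le_cancel_iff) auto
  also have "ln (2 * (1/2::real)^k) = ln 2 - k * ln 2" by (simp add: ln_mult ln_realpow ln_div)
  finally have "(real k - 1) * ln 2 \<le> - ln (min (2 * (1/2)^k) (1/10))" by (simp add: algebra_simps)
  moreover have "(real k - 1) * (1/2::real) \<le> (real k - 1) * ln 2"
    using False ln_2_ge_half by (intro mult_left_mono) auto
  moreover have "(real k + 1) / 5 \<le> (real k - 1) * (1/2::real)" using False by simp
  ultimately show ?thesis by linarith
qed (use neg_ln_min_tenth_ge_1[of "2 * (1/2)^k"] in simp)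

lemma ell_powr_increment_le_sqrt:
  fixes \<rho> \<alpha> :: real and k :: nat
  assumes "0 < \<alpha>" "\<alpha> \<le> 1/4" "0 < \<rho>" "\<rho> \<le> 1/10" "\<rho> \<le> (1/2)^k"
  shows "ell_powr \<alpha> (\<rho> + (1/2)^k) - ell_powr \<alpha> \<rho> \<le> 9 * \<alpha> * (- ln \<rho>) powr (1/2 - \<alpha>) / sqrt (k + 1)"
proof -
  define d :: real where "d = (1/2)^k"
  have d0: "0 < d" by (simp add: d_def)
  define a where "a = - ln \<rho>"
  define b where "b = - ln (min (2 * d) (1/10))"
  have b1: "1 \<le> b" using neg_ln_min_tenth_ge_1[of "2 * d"] d0 by (simp add: b_def)
  have ba: "b \<le> a"
    using assms d0 ln_le_cancel_iff[of \<rho> "min (2 * d) (1/10)"] by (simp add: a_def b_def d_def)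
  have "ell_powr \<alpha> (\<rho> + d) \<le> ell_powr \<alpha> (2 * d)"
    using assms by (intro monoD[OF mono_ell_powr]) (auto simp: d_def)
  then have increment: "ell_powr \<alpha> (\<rho> + d) - ell_powr \<alpha> \<rho> \<le> 4 * \<alpha> * a powr (1/2 - \<alpha>) / sqrt b"
    using powr_neg_diff_le_sqrt[OF assms(1,2) b1 ba] d0 assms
    by (simp add: ell_powr_eq a_def b_def min_def)
  have "(k + 1) / 5 \<le> b" using neg_ln_min_dyadic_ge[of k] by (simp add: b_def d_def)
  then have "sqrt (k + 1) / sqrt 5 \<le> sqrt b" by (simp add: real_sqrt_divide[symmetric])
  then have "1 / sqrt b \<le> sqrt 5 / sqrt (k + 1)"
    using b1 divide_left_mono[of "sqrt (k + 1) / sqrt 5" "sqrt b" 1] by simp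
  moreover have "4 * sqrt 5 \<le> (9::real)"
  proof -
    have "sqrt 5 \<le> sqrt ((9/4::real)^2)" by (rule real_sqrt_le_mono) (simp add: power2_eq_square)
    then show ?thesis by simp
  qed
  moreover have "0 \<le> \<alpha> * a powr (1/2 - \<alpha>)" using assms by simp
  ultimately have "4 * (\<alpha> * a powr (1/2 - \<alpha>)) * (1 / sqrt b) \<le> 4 * (\<alpha> * a powr (1/2 - \<alpha>)) * (sqrt 5 / sqrt (k + 1))"
    and "(4 * sqrt 5) * (\<alpha> * a powr (1/2 - \<alpha>)) / sqrt (k + 1) \<le> 9 * (\<alpha> * a powr (1/2 - \<alpha>)) / sqrt (k + 1)"
    by (intro mult_left_mono divide_right_mono mult_right_mono; simp)+
  then show ?thesis using increment by (simp add: d_def a_def ac_simps)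
qed

lemma sum_inverse_sqrt_le: "(\<Sum>k<n. 1 / sqrt (real k + 1)) \<le> 2 * sqrt (real n)"
proof (induction n)
  case (Suc n)
  define s where "s = sqrt (real n)"
  define t where "t = sqrt (real n + 1)"
  have "0 < t" by (simp add: t_def)
  have "t^2 = s^2 + 1" by (simp add: s_def t_def)
  moreover have "0 \<le> (t - s)^2" by simp
  ultimately have "1 \<le> 2 * (t - s) * t" by (simp add: power2_eq_square algebra_simps)
  then have "1 / t \<le> 2 * (t - s)" using \<open>0 < t\<close> by (simp add: divide_le_eq)
  then have "2 * s + 1 / t \<le> 2 * t" by simp
  then show ?case using Suc.IH by (simp add: s_def t_def add.commute)
qed simp

definition increment_majorant :: "real \<Rightarrow> real \<Rightarrow> nat \<Rightarrow> real" where
  "increment_majorant \<alpha> \<rho> k =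
     (if \<rho> \<le> (1/2)^k then 9 * \<alpha> * (- ln \<rho>) powr (1/2 - \<alpha>) / sqrt (real k + 1)
      else (1/2)^k / (\<rho> * (- ln \<rho>)))"

lemma increment_majorant_nonneg:
  assumes "0 \<le> \<alpha>" "0 < \<rho>" "\<rho> < 1"
  shows "0 \<le> increment_majorant \<alpha> \<rho> k"
proof -
  have "\<rho> * ln \<rho> < 0" using assms by (simp add: mult_pos_neg)
  then show ?thesis using assms by (simp add: increment_majorant_def divide_nonneg_neg)
qed

lemma ell_powr_increment_le_majorant:
  assumes "0 < \<alpha>" "\<alpha> \<le> 1/4" "0 < \<rho>" "2 * \<rho> \<le> 1/10"
  shows "ell_powr \<alpha> (\<rho> + (1/2)^k) - ell_powr \<alpha> \<rho> \<le> increment_majorant \<alpha> \<rho> k"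
proof (cases "\<rho> \<le> (1/2)^k")
  case True
  then show ?thesis
    using ell_powr_increment_le_sqrt[of \<alpha> \<rho> k] assms by (simp add: increment_majorant_def add.commute)
next
  case False
  then show ?thesis
    using ell_powr_increment_le_linear[of \<alpha> \<rho> "(1/2)^k"] assms by (simp add: increment_majorant_def)
qed

lemma dyadic_threshold:
  fixes \<rho> :: real
  assumes "0 < \<rho>" "\<rho> < 1"
  obtains k0 where "\<And>k. \<rho> \<le> (1/2)^k \<longleftrightarrow> k < k0" "(1/2)^k0 < \<rho>" "real k0 \<le> 2 * (- ln \<rho>) + 1"
proof -
  obtain n where "(1/2::real)^n < \<rho>" using real_arch_pow_inv[of \<rho> "1/2"] assms by auto
  define k0 where "k0 = (LEAST k. (1/2::real)^k < \<rho>)"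
  have k0: "(1/2)^k0 < \<rho>" unfolding k0_def by (rule LeastI) fact
  have iff: "\<rho> \<le> (1/2)^k \<longleftrightarrow> k < k0" for k
  proof
    assume "\<rho> \<le> (1/2)^k"
    then have "\<not> (1/2::real)^k \<le> (1/2)^k0" using k0 by linarith
    then show "k < k0" using power_decreasing[of k0 k "1/2::real"] by (cases "k0 \<le> k") auto
  next
    assume "k < k0"
    then show "\<rho> \<le> (1/2)^k" using not_less_Least[of k "\<lambda>k. (1/2::real)^k < \<rho>"] by (simp add: k0_def)
  qed
  have "k0 \<noteq> 0" using k0 assms by (intro notI) simp
  then have "\<rho> \<le> (1/2)^(k0 - 1)" using iff[of "k0 - 1"] by simp
  then have "ln \<rho> \<le> - (real (k0 - 1) * ln 2)"
    using assms ln_le_cancel_iff[of \<rho> "(1/2)^(k0 - 1)"] by (simp add: ln_realpow ln_div)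
  moreover have "real (k0 - 1) * (1/2) \<le> real (k0 - 1) * ln 2"
    using ln_2_ge_half by (intro mult_left_mono) auto
  ultimately have "real k0 \<le> 2 * (- ln \<rho>) + 1" using \<open>k0 \<noteq> 0\<close> by (simp add: of_nat_diff)
  with that iff k0 show ?thesis by blast
qed

text \<open>The O(a) shells with 2^(-k) \<ge> \<rho> contribute O(\<alpha> a^(1/2-\<alpha>) \<surd>a) together; the smaller
  ones form a geometric series dominated by its first term, which is at most 1/a.\<close>

lemma increment_majorant_suminf_le:
  fixes \<alpha> \<rho> :: real
  assumes \<alpha>: "0 < \<alpha>" "\<alpha> \<le> 1/4" and \<rho>: "0 < \<rho>" and a8: "8 \<le> - ln \<rho>"
  shows "summable (increment_majorant \<alpha> \<rho>)"
    and "suminf (increment_majorant \<alpha> \<rho>) \<le> 32 * \<alpha> * (- ln \<rho>) powr (1 - \<alpha>) + 2 / (- ln \<rho>)"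
proof -
  define a where "a = - ln \<rho>"
  define t where "t = increment_majorant \<alpha> \<rho>"
  have a8: "8 \<le> a" using a8 by (simp add: a_def)
  have "ln \<rho> < 0" using a8 by (simp add: a_def)
  then have "\<rho> < 1" using \<rho> by (simp add: ln_less_zero_iff)
  then obtain k0 where iff: "\<And>k. \<rho> \<le> (1/2)^k \<longleftrightarrow> k < k0"
      and k0: "(1/2)^k0 < \<rho>" "real k0 \<le> 2 * a + 1"
    using dyadic_threshold \<rho> unfolding a_def by blast
  have tshift: "t (m + k0) = ((1/2)^k0 / (\<rho> * a)) * (1/2)^m" for m
    using iff[of "m + k0"] by (simp add: t_def a_def increment_majorant_def power_add)
  have "summable (\<lambda>m. t (m + k0))"
    unfolding tshift by (intro summable_mult summable_geometric) simp
  then show summ: "summable (increment_majorant \<alpha> \<rho>)" by (simp add: summable_iff_shift t_def)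
  have "(\<Sum>m. t (m + k0)) = ((1/2)^k0 / (\<rho> * a)) * 2"
    unfolding tshift by (subst suminf_mult) (auto simp: suminf_geometric)
  also have "\<dots> \<le> 2 / a" using k0 a8 \<rho> by (simp add: field_simps)
  finally have tail: "(\<Sum>m. t (m + k0)) \<le> 2 / a" .
  have "(\<Sum>k<k0. t k) = 9 * \<alpha> * a powr (1/2 - \<alpha>) * (\<Sum>k<k0. 1 / sqrt (real k + 1))"
    using iff by (simp add: t_def a_def increment_majorant_def sum_distrib_left)
  also have "\<dots> \<le> 9 * \<alpha> * a powr (1/2 - \<alpha>) * (2 * sqrt (3 * a))"
    using sum_inverse_sqrt_le[of k0] k0 a8 \<alpha>
    by (intro mult_left_mono) (auto intro: order_trans real_sqrt_le_mono)
  also have "\<dots> = 18 * sqrt 3 * \<alpha> * (a powr (1/2 - \<alpha>) * a powr (1/2))"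
    using a8 by (simp add: real_sqrt_mult powr_half_sqrt)
  also have "\<dots> = 18 * sqrt 3 * \<alpha> * a powr (1 - \<alpha>)" by (simp add: powr_add[symmetric])
  also have "\<dots> \<le> 32 * \<alpha> * a powr (1 - \<alpha>)"
  proof -
    have "sqrt 3 \<le> sqrt ((16/9::real)^2)" by (rule real_sqrt_le_mono) (simp add: power2_eq_square)
    then show ?thesis using \<alpha> by (intro mult_right_mono) auto
  qed
  finally have head: "(\<Sum>k<k0. t k) \<le> 32 * \<alpha> * a powr (1 - \<alpha>)" .
  have "suminf t = (\<Sum>m. t (m + k0)) + (\<Sum>k<k0. t k)"
    using summ by (intro suminf_split_initial_segment) (simp add: t_def)
  then show "suminf (increment_majorant \<alpha> \<rho>) \<le> 32 * \<alpha> * (- ln \<rho>) powr (1 - \<alpha>) + 2 / (- ln \<rho>)"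
    using head tail by (simp add: t_def a_def)
qed

lemma neg_ln_gt_of_less_square:
  fixes \<rho> r A :: real
  assumes "0 < \<rho>" "\<rho> < r^2" "0 < r" "r \<le> exp (- A / 2)"
  shows "A < - ln \<rho>"
proof -
  have "ln \<rho> < ln (r^2)" using assms by (subst ln_less_cancel_iff) auto
  also have "\<dots> = 2 * ln r" using assms by (simp add: ln_realpow)
  also have "\<dots> \<le> - A" using assms ln_le_cancel_iff[of r "exp (- A / 2)"] by simp
  finally show ?thesis by simp
qed

text \<open>With M = \<lfloor>a/12\<rfloor> the largest inner ball has radius 4^M \<rho> \<le> e^(-3a/4), which is
  small against r > \<surd>\<rho> = e^(-a/2).\<close>

lemma inner_balls_fit:
  fixes \<rho> r :: real
  assumes "0 < \<rho>" "0 < r" "\<rho> < r^2" "8 \<le> - ln \<rho>"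
  defines "M \<equiv> nat \<lfloor>- ln \<rho> / 12\<rfloor>"
  shows "3 * (4^M * \<rho>) \<le> r" and "- ln \<rho> / 12 \<le> real M + 1"
proof -
  define a where "a = - ln \<rho>"
  have Ma: "real M \<le> a / 12" using assms(4) by (simp add: M_def a_def)
  show "- ln \<rho> / 12 \<le> real M + 1" using assms(4) by (simp add: M_def)
  have "ln (4::real) \<le> 3" using ln_le_minus_one[of 4] by simp
  then have "real M * ln 4 \<le> (a / 12) * 3" using Ma by (intro mult_mono) auto
  then have "exp (real M * ln 4) \<le> exp (a / 4)" by simp
  then have p4: "(4::real)^M \<le> exp (a / 4)" by (simp add: exp_of_nat_mult)
  have \<rho>: "\<rho> = exp (- a)" using assms(1) by (simp add: a_def)
  have "exp (- a / 2) ^ 2 = exp (- a)" by (simp add: exp_of_nat_mult[symmetric])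
  then have "exp (- a / 2) ^ 2 < r ^ 2" using assms(3) \<rho> by simp
  then have er: "exp (- a / 2) < r" by (rule power_less_imp_less_base) (use assms(2) in simp)
  have "3 \<le> exp (a / 4)" using exp_ge_add_one_self[of "a/4"] assms(4) by (simp add: a_def)
  then have "3 * (4^M * \<rho>) \<le> exp (a / 4) * (exp (a / 4) * exp (- a))"
    using p4 \<rho> by (intro mult_mono) auto
  also have "\<dots> = exp (- a / 2)" by (simp add: exp_add[symmetric])
  finally show "3 * (4^M * \<rho>) \<le> r" using er by simp
qed

lemma inner_gain_exceeds_shell_loss:
  fixes B W a \<alpha> :: real and M :: nat
  assumes "0 < B" "1 \<le> a" "0 < \<alpha>" "\<alpha> \<le> 1/4" "a / 12 \<le> real M + 1" "0 \<le> W"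
    "W * 32 * \<alpha> \<le> B / 48" "W * 2 \<le> B * a / 48"
  shows "B / 24 \<le> (real M + 1) * (B * a powr (- \<alpha>)) - W * (32 * \<alpha> * a powr (1 - \<alpha>) + 2 / a)"
proof -
  define X where "X = a powr (1 - \<alpha>)"
  have X1: "1 \<le> X" using assms by (simp add: X_def ge_one_powr_ge_zero)
  have "a * a powr (- \<alpha>) = X"
    using assms by (simp add: X_def powr_add[symmetric] powr_minus_divide[of a \<alpha>] powr_diff)
  then have "B * X / 12 = (a / 12) * (B * a powr (- \<alpha>))" by (simp add: field_simps)
  also have "\<dots> \<le> (real M + 1) * (B * a powr (- \<alpha>))"
    using assms by (intro mult_right_mono) auto
  finally have gain: "B * X / 12 \<le> (real M + 1) * (B * a powr (- \<alpha>))" .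
  have "W * 32 * \<alpha> * X \<le> B / 48 * X" using assms X1 by (intro mult_right_mono) auto
  moreover have "W * 2 / a \<le> B / 48 * X"
  proof -
    have "W * 2 / a \<le> B / 48" using assms by (simp add: divide_le_eq mult.commute)
    also have "\<dots> \<le> B / 48 * X" using assms X1 by simp
    finally show ?thesis .
  qed
  moreover have "W * (32 * \<alpha> * a powr (1 - \<alpha>) + 2 / a) = W * 32 * \<alpha> * X + W * 2 / a"
    by (simp add: X_def algebra_simps)
  ultimately have "W * (32 * \<alpha> * a powr (1 - \<alpha>) + 2 / a) \<le> B * X / 24" by simp
  moreover have "B / 24 \<le> B * X / 24" using X1 assms by simp
  ultimately show ?thesis using gain by linarith
qed

lemma dyadic_shell_exists:
  fixes d :: real
  assumes "0 < d" "d < 1"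
  shows "\<exists>k. (1/2)^(Suc k) \<le> d \<and> d < (1/2)^k"
proof -
  obtain n where "(1/2::real)^n < d" using real_arch_pow_inv[of d "1/2"] assms by auto
  then have ex: "\<exists>n. (1/2::real)^n \<le> d" by (auto intro: less_imp_le)
  define l where "l = (LEAST n. (1/2::real)^n \<le> d)"
  have l: "(1/2::real)^l \<le> d" unfolding l_def by (rule LeastI_ex[OF ex])
  have "l \<noteq> 0" using l assms by (intro notI) simp
  then obtain k where k: "l = Suc k" by (cases l) auto
  have "\<not> (1/2::real)^k \<le> d" using not_less_Least[of k "\<lambda>n. (1/2::real)^n \<le> d"] k by (simp add: l_def)
  then show ?thesis using l k by auto
qed

lemma dyadic_shells_integral_le:
  fixes g :: "'a::euclidean_space \<Rightarrow> real" and x :: 'a and m :: "nat \<Rightarrow> real"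
  assumes meas: "g \<in> borel_measurable lborel"
    and nonneg: "\<And>y. 0 \<le> g y"
    and supp: "\<And>y. y \<notin> ball x 1 \<Longrightarrow> g y = 0"
    and centre: "g x = 0"
    and shell: "\<And>k y. (1/2)^(Suc k) \<le> dist x y \<Longrightarrow> dist x y < (1/2)^k \<Longrightarrow> g y \<le> m k"
    and m_nonneg: "\<And>k. 0 \<le> m k"
    and summ: "summable (\<lambda>k. m k * (1/2)^(k * DIM('a)))"
  shows "integrable lborel g"
    and "integral\<^sup>L lborel g \<le> unit_ball_vol (DIM('a)) * (\<Sum>k. m k * (1/2)^(k * DIM('a)))"
proof -
  define S where "S k = ball x ((1/2)^k) - ball x ((1/2)^(Suc k))" for k
  define \<omega> where "\<omega> = unit_ball_vol (DIM('a))"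
  have \<omega>: "0 < \<omega>" by (simp add: \<omega>_def)
  have [measurable]: "S k \<in> sets lborel" for k by (simp add: S_def)
  have pointwise: "ennreal (g y) \<le> (\<Sum>k. ennreal (m k) * indicator (S k) y)" for y
  proof (cases "y \<in> ball x 1 \<and> y \<noteq> x")
    case True
    then obtain k where k: "(1/2)^(Suc k) \<le> dist x y" "dist x y < (1/2)^k"
      using dyadic_shell_exists[of "dist x y"] by auto
    then have "ennreal (g y) \<le> ennreal (m k) * indicator (S k) y"
      using shell[OF k] by (simp add: S_def ennreal_leI)
    also have "\<dots> \<le> (\<Sum>k. ennreal (m k) * indicator (S k) y)"
      using ennreal_suminf_lessD not_le by blast
    finally show ?thesis .
  qed (use supp centre in auto)
  have "(\<integral>\<^sup>+ y. ennreal (g y) \<partial>lborel) \<le> (\<integral>\<^sup>+ y. (\<Sum>k. ennreal (m k) * indicator (S k) y) \<partial>lborel)"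
    by (rule nn_integral_mono) (use pointwise in auto)
  also have "\<dots> = (\<Sum>k. \<integral>\<^sup>+ y. ennreal (m k) * indicator (S k) y \<partial>lborel)"
    by (rule nn_integral_suminf) auto
  also have "\<dots> = (\<Sum>k. ennreal (m k) * emeasure lborel (S k))"
    by (rule suminf_cong, rule nn_integral_cmult_indicator) (simp add: S_def)
  also have "\<dots> \<le> (\<Sum>k. ennreal (\<omega> * (m k * (1/2)^(k * DIM('a)))))"
  proof (rule suminf_le)
    fix k
    have "emeasure lborel (S k) \<le> emeasure lborel (ball x ((1/2)^k))"
      by (rule emeasure_mono) (auto simp: S_def)
    also have "\<dots> = ennreal (\<omega> * (1/2)^(k * DIM('a)))"
      by (simp add: emeasure_ball \<omega>_def power_mult[symmetric] mult.commute)
    finally have "ennreal (m k) * emeasure lborel (S k) \<le> ennreal (m k) * ennreal (\<omega> * (1/2)^(k * DIM('a)))"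
      by (rule mult_left_mono) simp
    then show "ennreal (m k) * emeasure lborel (S k) \<le> ennreal (\<omega> * (m k * (1/2)^(k * DIM('a))))"
      using m_nonneg[of k] \<omega> by (simp add: ennreal_mult'[symmetric] ac_simps)
  qed auto
  also have "\<dots> = ennreal (\<omega> * (\<Sum>k. m k * (1/2)^(k * DIM('a))))"
    using m_nonneg \<omega> summ
    by (subst suminf_ennreal2) (auto intro: summable_mult simp: suminf_mult)
  finally have bound: "(\<integral>\<^sup>+ y. ennreal (g y) \<partial>lborel) \<le> ennreal (\<omega> * (\<Sum>k. m k * (1/2)^(k * DIM('a))))" .
  show "integrable lborel g"
    using meas nonneg le_less_trans[OF bound ennreal_less_top] by (intro integrableI_nonneg) auto
  have "0 \<le> \<omega> * (\<Sum>k. m k * (1/2)^(k * DIM('a)))"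
    using \<omega> suminf_nonneg[OF summ] m_nonneg by simp
  then show "integral\<^sup>L lborel g \<le> unit_ball_vol (DIM('a)) * (\<Sum>k. m k * (1/2)^(k * DIM('a)))"
    using meas nonneg enn2real_leI[OF _ bound]
    by (subst integral_eq_nn_integral) (auto simp: \<omega>_def)
qed

lemma measurable_kernel_slice:
  fixes K :: "'a::euclidean_space \<Rightarrow> 'a \<Rightarrow> real"
  assumes "(\<lambda>p. K (fst p) (snd p)) \<in> borel_measurable (restrict_space (lborel \<Otimes>\<^sub>M lborel) (\<Omega> \<times> ball 0 1))"
    and "x \<in> \<Omega>"
  shows "(\<lambda>y. K x (y - x)) \<in> borel_measurable (restrict_space lborel (ball x 1))"
proof -
  have "(\<lambda>y. (x, y - x)) \<in> restrict_space lborel (ball x 1) \<rightarrow>\<^sub>M restrict_space (lborel \<Otimes>\<^sub>M lborel) (\<Omega> \<times> ball 0 1)"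
    by (rule measurable_restrict_space3) (use assms(2) in \<open>auto simp: dist_norm norm_minus_commute\<close>)
  from measurable_compose[OF this assms(1)] show ?thesis by simp
qed

lemma LK_integrand_measurable:
  fixes K :: "'a::euclidean_space \<Rightarrow> 'a \<Rightarrow> real" and \<phi> :: "'a \<Rightarrow> real"
  assumes "(\<lambda>y. K x (y - x)) \<in> borel_measurable (restrict_space lborel (ball x 1))"
    and [measurable]: "\<phi> \<in> borel_measurable lborel"
  shows "(\<lambda>y. indicator (ball x 1) y *\<^sub>R ((\<phi> x - \<phi> y) / norm (y - x) ^ DIM('a) * K x (y - x)))
           \<in> borel_measurable lborel"
proof -
  have "(\<lambda>y. (\<phi> x - \<phi> y) / norm (y - x) ^ DIM('a)) \<in> borel_measurable (restrict_space lborel (ball x 1))"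
    by (rule measurable_restrict_space1) measurable
  then have "(\<lambda>y. (\<phi> x - \<phi> y) / norm (y - x) ^ DIM('a) * K x (y - x)) \<in> borel_measurable (restrict_space lborel (ball x 1))"
    using assms(1) by (rule borel_measurable_times)
  then show ?thesis by (subst (asm) borel_measurable_restrict_space_iff) auto
qed

lemma inverse_power_le_shell:
  fixes d :: real
  assumes "(1/2)^(Suc k) \<le> d"
  shows "1 / d ^ n \<le> 1 / ((1/2)^(Suc k))^n"
proof -
  have "0 < ((1/2::real)^(Suc k))^n" by simp
  moreover have "0 < d" using assms zero_less_power[of "1/2::real" "Suc k"] by linarith
  moreover have "((1/2)^(Suc k))^n \<le> d ^ n" using assms by (intro power_mono) auto
  ultimately show ?thesis by (intro divide_left_mono) auto
qed

lemma shell_weight_eq: "c / ((1/2::real)^(Suc k))^n * (1/2)^(k*n) = c * 2^n"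
proof -
  have "((1/2::real)^(Suc k))^n = (1/2)^(k*n) * (1/2)^n"
    by (simp only: power_Suc2 power_mult_distrib power_mult)
  then show ?thesis by (simp add: field_simps power_one_over)
qed

context
  fixes lam Lam \<alpha> r :: real and x :: "'a::euclidean_space" and K :: "'a \<Rightarrow> 'a \<Rightarrow> real"
  assumes lam: "0 < lam" "lam \<le> Lam" and \<alpha>: "0 < \<alpha>" "\<alpha> \<le> 1/4"
    and r: "0 < r" "r < 1" and x: "r < norm x" "norm x - r < r^2"
    and ln_dist: "8 \<le> - ln (norm x - r)"
    and K_bounds: "\<forall>z\<in>ball 0 1. lam \<le> K x z \<and> K x z \<le> Lam"
    and K_measurable: "(\<lambda>y. K x (y - x)) \<in> borel_measurable (restrict_space lborel (ball x 1))"
begin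

abbreviation (input) "\<rho> \<equiv> norm x - r"
abbreviation (input) "a \<equiv> - ln (norm x - r)"
abbreviation (input) "phi \<equiv> \<lambda>y. ell_powr \<alpha> (norm y - r)"
abbreviation (input) "integrand \<equiv> \<lambda>y. indicator (ball x 1) y *\<^sub>R ((phi x - phi y) / norm (y - x) ^ DIM('a) * K x (y - x))"

lemma rho_pos: "0 < \<rho>"
  using x by simp

lemma rho_small: "2 * \<rho> \<le> 1/10"
proof -
  have "\<rho> = exp (ln \<rho>)" using rho_pos by simp
  also have "\<dots> \<le> exp (-8)" using ln_dist by simp
  also have "exp (-8::real) \<le> 1/20"
  proof -
    have "(20::real) \<le> 1 + 8 + 8^2/2" by simp
    also have "\<dots> \<le> exp 8" by (rule exp_lower_Taylor_quadratic) simp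
    finally show ?thesis by (simp add: exp_minus field_simps)
  qed
  finally show ?thesis by simp
qed

lemma phi_bounds: "0 \<le> phi y" "phi y \<le> 1"
  using \<alpha> by (simp_all add: ell_powr_nonneg ell_powr_le_1)

lemma kernel_bounds: "y \<in> ball x 1 \<Longrightarrow> lam \<le> K x (y - x) \<and> K x (y - x) \<le> Lam"
  using K_bounds by (auto simp: dist_norm norm_minus_commute)

lemma phi_diff_le:
  assumes "dist x y < (1/2)^k"
  shows "\<bar>phi x - phi y\<bar> \<le> 2 * (1/2)^k / \<rho>"
proof -
  have dd: "\<bar>(norm y - r) - \<rho>\<bar> \<le> dist x y"
    using norm_triangle_ineq3[of y x] by (simp add: dist_norm norm_minus_commute)
  show ?thesis
  proof (cases "dist x y \<le> \<rho> / 2")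
    case True
    have "\<bar>phi y - phi x\<bar> \<le> 2 * \<bar>(norm y - r) - \<rho>\<bar> / \<rho>"
      using \<alpha> rho_pos rho_small dd True by (intro ell_powr_lipschitz_near) auto
    also have "\<dots> \<le> 2 * (1/2)^k / \<rho>"
      using dd assms rho_pos by (intro divide_right_mono) auto
    finally show ?thesis by (simp add: abs_minus_commute)
  next
    case False
    have "\<bar>phi x - phi y\<bar> \<le> 1" using phi_bounds[of x] phi_bounds[of y] by linarith
    also have "1 \<le> 2 * dist x y / \<rho>" using False rho_pos by (simp add: field_simps)
    also have "\<dots> \<le> 2 * (1/2)^k / \<rho>" using assms rho_pos by (intro divide_right_mono) auto
    finally show ?thesis .
  qed
qed

lemma integrand_eq:
  "y \<in> ball x 1 \<Longrightarrow> integrand y = (phi x - phi y) * (1 / dist x y ^ DIM('a)) * K x (y - x)"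
  by (simp add: dist_norm norm_minus_commute)

lemma integrand_abs_le_on_shell:
  assumes "(1/2)^(Suc k) \<le> dist x y" "dist x y < (1/2)^k"
  shows "\<bar>integrand y\<bar> \<le> Lam * (2 * (1/2)^k / \<rho>) / ((1/2)^(Suc k))^DIM('a)"
proof (cases "y \<in> ball x 1")
  case True
  have "0 < dist x y" using assms(1) zero_less_power[of "1/2::real" "Suc k"] by linarith
  have K: "0 \<le> K x (y - x)" "K x (y - x) \<le> Lam" using kernel_bounds[OF True] lam by auto
  have "\<bar>integrand y\<bar> = \<bar>phi x - phi y\<bar> * (1 / dist x y ^ DIM('a)) * K x (y - x)"
    using K unfolding integrand_eq[OF True] by (simp add: abs_mult)
  also have "\<dots> \<le> (2 * (1/2)^k / \<rho>) * (1 / ((1/2)^(Suc k))^DIM('a)) * Lam"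
    using phi_diff_le[OF assms(2)] inverse_power_le_shell[OF assms(1)] K \<open>0 < dist x y\<close> rho_pos
    by (intro mult_mono) auto
  also have "\<dots> = Lam * (2 * (1/2)^k / \<rho>) / ((1/2)^(Suc k))^DIM('a)" by simp
  finally show ?thesis .
qed (use lam rho_pos in simp)

lemma integrand_negative_part_le_on_shell:
  assumes "(1/2)^(Suc k) \<le> dist x y" "dist x y < (1/2)^k"
  shows "max 0 (- integrand y) \<le> Lam * increment_majorant \<alpha> \<rho> k / ((1/2)^(Suc k))^DIM('a)"
proof -
  have \<rho>1: "\<rho> < 1" using rho_small by simp
  have maj: "0 \<le> increment_majorant \<alpha> \<rho> k"
    using increment_majorant_nonneg \<alpha> rho_pos \<rho>1 by simp
  show ?thesis
  proof (cases "y \<in> ball x 1")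
    case True
    have "0 < dist x y" using assms(1) zero_less_power[of "1/2::real" "Suc k"] by linarith
    have K: "0 \<le> K x (y - x)" "K x (y - x) \<le> Lam" using kernel_bounds[OF True] lam by auto
    define D where "D = max 0 (phi y - phi x)"
    have "norm y - r \<le> \<rho> + (1/2)^k"
      using norm_triangle_ineq2[of y x] assms(2) by (simp add: dist_norm norm_minus_commute)
    then have "phi y \<le> ell_powr \<alpha> (\<rho> + (1/2)^k)" using \<alpha> by (intro monoD[OF mono_ell_powr]) auto
    then have D: "0 \<le> D" "D \<le> increment_majorant \<alpha> \<rho> k"
      using ell_powr_increment_le_majorant[of \<alpha> \<rho> k] \<alpha> rho_pos rho_small maj by (auto simp: D_def)
    have "- integrand y = (phi y - phi x) * (1 / dist x y ^ DIM('a)) * K x (y - x)"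
      unfolding integrand_eq[OF True] by (simp add: algebra_simps)
    also have "\<dots> \<le> D * (1 / dist x y ^ DIM('a)) * K x (y - x)"
      using K \<open>0 < dist x y\<close> by (intro mult_right_mono) (auto simp: D_def)
    finally have "max 0 (- integrand y) \<le> D * (1 / dist x y ^ DIM('a)) * K x (y - x)"
      using D K \<open>0 < dist x y\<close> by simp
    also have "\<dots> \<le> increment_majorant \<alpha> \<rho> k * (1 / ((1/2)^(Suc k))^DIM('a)) * Lam"
      using D inverse_power_le_shell[OF assms(1)] K \<open>0 < dist x y\<close> by (intro mult_mono) auto
    also have "\<dots> = Lam * increment_majorant \<alpha> \<rho> k / ((1/2)^(Suc k))^DIM('a)" by simp
    finally show ?thesis .
  qed (use lam maj in simp)
qed

lemma phi_measurable[measurable]: "phi \<in> borel_measurable lborel"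
proof -
  have [measurable]: "ell_powr \<alpha> \<in> borel_measurable borel" using \<alpha>(1) by (intro ell_powr_measurable) simp
  show ?thesis by measurable
qed

lemma integrand_measurable[measurable]: "integrand \<in> borel_measurable lborel"
  using LK_integrand_measurable[where K = K and x = x and \<phi> = phi, OF K_measurable phi_measurable] .

lemma integrable_integrand: "integrable lborel integrand"
proof -
  define m where "m k = Lam * (2 * (1/2)^k / \<rho>) / ((1/2::real)^(Suc k))^DIM('a)" for k
  have "(\<lambda>k. m k * (1/2)^(k * DIM('a))) = (\<lambda>k. (Lam * 2 / \<rho> * 2^DIM('a)) * (1/2)^k)"
    unfolding m_def by (rule ext, subst shell_weight_eq) simp
  then have "summable (\<lambda>k. m k * (1/2)^(k * DIM('a)))" by (simp add: summable_geometric)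
  then have "integrable lborel (\<lambda>y. \<bar>integrand y\<bar>)"
  proof (rule dyadic_shells_integral_le(1)[rotated -1])
    show "(\<lambda>y. \<bar>integrand y\<bar>) \<in> borel_measurable lborel" by measurable
    show "\<bar>integrand y\<bar> \<le> m k" if "(1/2)^(Suc k) \<le> dist x y" "dist x y < (1/2)^k" for k y
      using integrand_abs_le_on_shell[OF that] by (simp add: m_def)
  qed (use lam rho_pos in \<open>auto simp: m_def\<close>)
  then show ?thesis using integrable_abs_iff[OF integrand_measurable] by simp
qed

lemma negative_part_integral_le:
  shows "integrable lborel (\<lambda>y. max 0 (- integrand y))"
    and "integral\<^sup>L lborel (\<lambda>y. max 0 (- integrand y))
           \<le> unit_ball_vol (DIM('a)) * (Lam * 2^DIM('a) * (32 * \<alpha> * a powr (1 - \<alpha>) + 2 / a))"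
proof -
  define m where "m k = Lam * increment_majorant \<alpha> \<rho> k / ((1/2::real)^(Suc k))^DIM('a)" for k
  have m_eq: "(\<lambda>k. m k * (1/2)^(k * DIM('a))) = (\<lambda>k. (Lam * 2^DIM('a)) * increment_majorant \<alpha> \<rho> k)"
    unfolding m_def by (rule ext, subst shell_weight_eq) simp
  note majorant = increment_majorant_suminf_le[OF \<alpha> rho_pos ln_dist]
  have summ: "summable (\<lambda>k. m k * (1/2)^(k * DIM('a)))"
    unfolding m_eq using majorant(1) by (rule summable_mult)
  have m_nonneg: "0 \<le> m k" for k
    using lam increment_majorant_nonneg[of \<alpha> \<rho> k] \<alpha> rho_pos rho_small by (simp add: m_def)
  have meas: "(\<lambda>y. max 0 (- integrand y)) \<in> borel_measurable lborel" by measurable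
  have shell: "max 0 (- integrand y) \<le> m k" if "(1/2)^(Suc k) \<le> dist x y" "dist x y < (1/2)^k" for k y
    using integrand_negative_part_le_on_shell[OF that] by (simp add: m_def)
  have supp: "max 0 (- integrand y) = 0" if "y \<notin> ball x 1" for y
    using that by simp
  note shells = dyadic_shells_integral_le[OF meas _ supp _ shell m_nonneg summ]
  show "integrable lborel (\<lambda>y. max 0 (- integrand y))" by (rule shells(1)) simp_all
  have "(\<Sum>k. m k * (1/2)^(k * DIM('a))) \<le> Lam * 2^DIM('a) * (32 * \<alpha> * a powr (1 - \<alpha>) + 2 / a)"
    unfolding m_eq using majorant lam by (subst suminf_mult) (auto intro: mult_left_mono)
  then show "integral\<^sup>L lborel (\<lambda>y. max 0 (- integrand y))
           \<le> unit_ball_vol (DIM('a)) * (Lam * 2^DIM('a) * (32 * \<alpha> * a powr (1 - \<alpha>) + 2 / a))"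
    by (intro order_trans[OF shells(2)] mult_left_mono) simp_all
qed


abbreviation (input) "inner_radius \<equiv> \<lambda>k::nat. 4^k * \<rho>"
abbreviation (input) "inner_ball \<equiv> \<lambda>k::nat. ball (x - (2 * inner_radius k / norm x) *\<^sub>R x) (inner_radius k)"
abbreviation (input) "inner_height \<equiv> \<lambda>k::nat. lam * phi x / (3 * inner_radius k)^DIM('a)"

lemma inner_ball_geometry:
  assumes "3 * inner_radius k \<le> r" "y \<in> inner_ball k"
  shows "inner_radius k < dist x y" "dist x y < 3 * inner_radius k" "norm y < r" "y \<in> ball x 1"
proof -
  define s c where "s = inner_radius k" and "c = x - (2 * s / norm x) *\<^sub>R x"
  have s: "0 < s" "\<rho> \<le> s" using rho_pos by (simp_all add: s_def)
  have "0 < norm x" using x r by linarith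
  have "2 * s \<le> norm x" using assms(1) x(1) s(1) unfolding s_def by linarith
  then have "0 \<le> 1 - 2 * s / norm x" using \<open>0 < norm x\<close> by (simp add: field_simps)
  moreover have "c = (1 - 2 * s / norm x) *\<^sub>R x" by (simp add: c_def algebra_simps)
  ultimately have "norm c = (1 - 2 * s / norm x) * norm x" by simp
  then have nc: "norm c = norm x - 2 * s" using \<open>0 < norm x\<close> by (simp add: field_simps)
  have dxc: "dist x c = 2 * s" using \<open>0 < norm x\<close> s by (simp add: c_def dist_norm)
  have dcy: "dist c y < s" using assms(2) by (simp add: s_def c_def)
  show "dist x y < 3 * inner_radius k"
    using dist_triangle[of x y c] dxc dcy by (simp add: s_def)
  show "inner_radius k < dist x y"
    using dist_triangle[of x c y] dxc dcy by (simp add: s_def dist_commute)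
  then show "y \<in> ball x 1" using \<open>dist x y < 3 * inner_radius k\<close> assms(1) r by simp
  show "norm y < r"
    using norm_triangle_ineq2[of y c] nc dcy s by (simp add: dist_norm norm_minus_commute)
qed

lemma inner_radius_mono: "j \<le> k \<Longrightarrow> inner_radius j \<le> inner_radius k"
  using rho_pos by (simp add: power_increasing)

text \<open>The ratio 4 between consecutive radii separates the annuli
  inner_radius k < |y - x| < 3 inner_radius k containing the inner balls.\<close>

lemma inner_balls_disjoint:
  assumes "j \<noteq> k" "3 * inner_radius j \<le> r" "3 * inner_radius k \<le> r" "y \<in> inner_ball j"
  shows "y \<notin> inner_ball k"
proof
  assume "y \<in> inner_ball k"
  have dist_j: "inner_radius j < dist x y" "dist x y < 3 * inner_radius j"
    and dist_k: "inner_radius k < dist x y" "dist x y < 3 * inner_radius k"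
    using inner_ball_geometry assms \<open>y \<in> inner_ball k\<close> by auto
  have sep: "4 * inner_radius i \<le> inner_radius i'" if "i < i'" for i i'
    using inner_radius_mono[of "Suc i" i'] that by simp
  show False
  proof (cases "j < k")
    case True
    then show False using sep[OF True] dist_j dist_k by linarith
  next
    case False
    then have "k < j" using assms(1) by simp
    show False using sep[OF \<open>k < j\<close>] dist_j dist_k by linarith
  qed
qed

lemma integrand_ge_on_inner_ball:
  assumes "3 * inner_radius k \<le> r" "y \<in> inner_ball k"
  shows "inner_height k \<le> integrand y"
proof -
  note geometry = inner_ball_geometry[OF assms]
  have "phi y = 0" using geometry(3) by (simp add: ell_powr_eq_0)
  have "0 < inner_radius k" using rho_pos by simp
  then have "0 < dist x y" using geometry(1) by linarith
  have "dist x y ^ DIM('a) \<le> (3 * inner_radius k)^DIM('a)"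
    using geometry(2) by (intro power_mono) auto
  then have "1 / (3 * inner_radius k)^DIM('a) \<le> 1 / dist x y ^ DIM('a)"
    using \<open>0 < dist x y\<close> by (intro frac_le) auto
  have "inner_height k = phi x * (1 / (3 * inner_radius k)^DIM('a)) * lam" by simp
  also have "\<dots> \<le> phi x * (1 / dist x y ^ DIM('a)) * K x (y - x)"
    using \<open>1 / (3 * inner_radius k)^DIM('a) \<le> 1 / dist x y ^ DIM('a)\<close> phi_bounds[of x]
      kernel_bounds[OF geometry(4)] lam
    by (intro mult_mono mult_left_mono) auto
  also have "\<dots> = integrand y" unfolding integrand_eq[OF geometry(4)] using \<open>phi y = 0\<close> by simp
  finally show ?thesis .
qed

lemma inner_balls_sum_le:
  assumes "3 * inner_radius M \<le> r"
  shows "(\<Sum>k\<le>M. inner_height k * indicator (inner_ball k) y) \<le> max 0 (integrand y)"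
proof (cases "\<exists>j\<le>M. y \<in> inner_ball j")
  case True
  then obtain j where j: "j \<le> M" "y \<in> inner_ball j" by auto
  have fits: "3 * inner_radius k \<le> r" if "k \<le> M" for k
    using inner_radius_mono[OF that] assms by simp
  have "indicator (inner_ball k) y = (if k = j then 1 else (0::real))" if "k \<le> M" for k
    using inner_balls_disjoint[of j k y] fits that j by auto
  then have "(\<Sum>k\<le>M. inner_height k * indicator (inner_ball k) y) = (\<Sum>k\<le>M. if k = j then inner_height k else 0)"
    by (intro sum.cong) auto
  also have "\<dots> = inner_height j" using j by simp
  also have "\<dots> \<le> integrand y" using integrand_ge_on_inner_ball fits j by blast
  finally show ?thesis by simp
qed (auto intro: sum_nonpos)

lemma integral_inner_balls_sum:
  "integrable lborel (\<lambda>y. \<Sum>k\<le>M. inner_height k * indicator (inner_ball k) y)"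
  "integral\<^sup>L lborel (\<lambda>y. \<Sum>k\<le>M. inner_height k * indicator (inner_ball k) y)
     = (real M + 1) * (lam * phi x * unit_ball_vol (DIM('a)) / 3^DIM('a))"
proof -
  have integrable: "integrable lborel (\<lambda>y. inner_height k * indicator (inner_ball k) y)" for k
    using emeasure_bounded_finite[of "inner_ball k"] by simp
  then show "integrable lborel (\<lambda>y. \<Sum>k\<le>M. inner_height k * indicator (inner_ball k) y)" by simp
  have "integral\<^sup>L lborel (\<lambda>y. inner_height k * indicator (inner_ball k) y)
        = lam * phi x * unit_ball_vol (DIM('a)) / 3^DIM('a)" for k
  proof -
    define R where "R = inner_radius k"
    have "0 < R" using rho_pos by (simp add: R_def)
    have "integral\<^sup>L lborel (\<lambda>y. inner_height k * indicator (inner_ball k) y)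
          = inner_height k * measure lborel (inner_ball k)"
      by (simp add: integral_mult_right_zero)
    also have "measure lborel (inner_ball k) = unit_ball_vol (DIM('a)) * R ^ DIM('a)"
      using \<open>0 < R\<close> unfolding R_def by (intro content_ball) simp
    also have "inner_height k * (unit_ball_vol (DIM('a)) * R ^ DIM('a))
        = lam * phi x * unit_ball_vol (DIM('a)) / 3^DIM('a)"
      using \<open>0 < R\<close> unfolding R_def[symmetric] by (simp add: power_mult_distrib field_simps)
    finally show ?thesis .
  qed
  then show "integral\<^sup>L lborel (\<lambda>y. \<Sum>k\<le>M. inner_height k * indicator (inner_ball k) y)
     = (real M + 1) * (lam * phi x * unit_ball_vol (DIM('a)) / 3^DIM('a))"
    using Bochner_Integration.integral_sum[where f = "\<lambda>k y. inner_height k * indicator (inner_ball k) y"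
        and I = "{..M}" and M = lborel, OF integrable]
    by simp
qed

lemma LK_phi_ge_inner_minus_shells:
  assumes "3 * inner_radius M \<le> r"
  shows "(real M + 1) * (lam * phi x * unit_ball_vol (DIM('a)) / 3^DIM('a))
           - unit_ball_vol (DIM('a)) * (Lam * 2^DIM('a) * (32 * \<alpha> * a powr (1 - \<alpha>) + 2 / a))
         \<le> LK K phi x"
proof -
  let ?inner = "\<lambda>y. \<Sum>k\<le>M. inner_height k * indicator (inner_ball k) y"
  have "integral\<^sup>L lborel (\<lambda>y. ?inner y - max 0 (- integrand y)) \<le> integral\<^sup>L lborel integrand"
  proof (rule integral_mono)
    show "integrable lborel (\<lambda>y. ?inner y - max 0 (- integrand y))"
      using integral_inner_balls_sum(1) negative_part_integral_le(1) by (rule Bochner_Integration.integrable_diff)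
    show "?inner y - max 0 (- integrand y) \<le> integrand y" for y
      using inner_balls_sum_le[OF assms, of y] by simp
  qed (rule integrable_integrand)
  moreover have "integral\<^sup>L lborel (\<lambda>y. ?inner y - max 0 (- integrand y))
      = integral\<^sup>L lborel ?inner - integral\<^sup>L lborel (\<lambda>y. max 0 (- integrand y))"
    using integral_inner_balls_sum(1) negative_part_integral_le(1) by (rule Bochner_Integration.integral_diff)
  ultimately show ?thesis
    using integral_inner_balls_sum(2) negative_part_integral_le(2)
    by (simp add: LK_def set_lebesgue_integral_def)
qed

lemma LK_phi_ge:
  assumes "\<alpha> * (1536 * Lam * 6^DIM('a)) \<le> lam" "96 * Lam * 6^DIM('a) \<le> lam * a"
  shows "lam * unit_ball_vol (DIM('a)) / 3^DIM('a) / 24 \<le> LK K phi x"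
proof -
  define M where "M = nat \<lfloor>a / 12\<rfloor>"
  define B where "B = lam * unit_ball_vol (DIM('a)) / 3^DIM('a)"
  define W where "W = unit_ball_vol (DIM('a)) * Lam * 2^DIM('a)"
  have six: "(6::real)^DIM('a) = 2^DIM('a) * 3^DIM('a)" by (simp add: power_mult_distrib[symmetric])
  have "\<rho> \<le> 1/10" using rho_small by simp
  then have "phi x = a powr (- \<alpha>)" using rho_pos by (simp add: ell_powr_eq min_def)
  then have "lam * phi x * unit_ball_vol (DIM('a)) / 3^DIM('a) = B * a powr (- \<alpha>)"
    by (simp add: B_def)
  moreover have "unit_ball_vol (DIM('a)) * (Lam * 2^DIM('a) * (32 * \<alpha> * a powr (1 - \<alpha>) + 2 / a))
      = W * (32 * \<alpha> * a powr (1 - \<alpha>) + 2 / a)"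
    by (simp only: W_def mult.assoc)
  moreover have "3 * inner_radius M \<le> r"
    using inner_balls_fit(1)[OF rho_pos r(1) x(2) ln_dist] by (simp add: M_def)
  ultimately have "(real M + 1) * (B * a powr (- \<alpha>)) - W * (32 * \<alpha> * a powr (1 - \<alpha>) + 2 / a) \<le> LK K phi x"
    using LK_phi_ge_inner_minus_shells[of M] by (simp only:)
  moreover have "W * 32 * \<alpha> \<le> B / 48"
  proof -
    have "W * 32 * \<alpha> = (\<alpha> * (1536 * Lam * 6^DIM('a))) * (unit_ball_vol (DIM('a)) / (48 * 3^DIM('a)))"
      by (simp add: W_def six field_simps)
    also have "\<dots> \<le> lam * (unit_ball_vol (DIM('a)) / (48 * 3^DIM('a)))"
      using assms(1) by (intro mult_right_mono) auto
    finally show ?thesis by (simp add: B_def)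
  qed
  moreover have "W * 2 \<le> B * a / 48"
  proof -
    have "W * 2 = (96 * Lam * 6^DIM('a)) * (unit_ball_vol (DIM('a)) / (48 * 3^DIM('a)))"
      by (simp add: W_def six field_simps)
    also have "\<dots> \<le> (lam * a) * (unit_ball_vol (DIM('a)) / (48 * 3^DIM('a)))"
      using assms(2) by (intro mult_right_mono) auto
    finally show ?thesis by (simp add: B_def field_simps)
  qed
  moreover have "B / 24 \<le> (real M + 1) * (B * a powr (- \<alpha>)) - W * (32 * \<alpha> * a powr (1 - \<alpha>) + 2 / a)"
    using inner_balls_fit(2)[OF rho_pos r(1) x(2) ln_dist] ln_dist \<alpha> lam \<open>W * 32 * \<alpha> \<le> B / 48\<close> \<open>W * 2 \<le> B * a / 48\<close>
    by (intro inner_gain_exceeds_shell_loss) (auto simp: B_def W_def M_def)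
  ultimately show ?thesis by (simp add: B_def)
qed

end

lemma LK_barrier_lower_bound:
  fixes K :: "'a::euclidean_space \<Rightarrow> 'a \<Rightarrow> real"
  assumes lam: "0 < lam" "lam \<le> Lam"
    and \<alpha>: "0 < \<alpha>" "\<alpha> \<le> 1/4" "\<alpha> * (1536 * Lam * 6^DIM('a)) \<le> lam"
    and A: "8 \<le> A" "96 * Lam * 6^DIM('a) / lam \<le> A"
    and r: "0 < r" "r \<le> exp (- A / 2)" and \<Omega>: "ball 0 (r + r^2) - cball 0 r \<subseteq> \<Omega>"
    and K: "(\<lambda>p. K (fst p) (snd p)) \<in> borel_measurable (restrict_space (lborel \<Otimes>\<^sub>M lborel) (\<Omega> \<times> ball 0 1))"
      "\<forall>x\<in>\<Omega>. \<forall>z\<in>ball 0 1. lam \<le> K x z \<and> K x z \<le> Lam"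
    and x: "x \<in> ball 0 (r + r^2)" "r < norm x"
  shows "lam * unit_ball_vol (DIM('a)) / 3^DIM('a) / 24 \<le> LK K (\<lambda>y. ell (max (norm y - r) 0) powr \<alpha>) x"
proof -
  have "x \<in> \<Omega>" using \<Omega> x by auto
  have "A < - ln (norm x - r)"
    using x r by (intro neg_ln_gt_of_less_square) auto
  have "96 * Lam * 6^DIM('a) \<le> A * lam" using A(2) lam by (simp add: pos_divide_le_eq)
  also have "\<dots> \<le> lam * - ln (norm x - r)"
    using \<open>A < - ln (norm x - r)\<close> lam mult_right_mono[of A "- ln (norm x - r)" lam]
    by (simp add: mult.commute)
  finally have "96 * Lam * 6^DIM('a) \<le> lam * - ln (norm x - r)" .
  moreover have "exp (- A / 2) < 1" using A by simp
  then have "r < 1" using r by linarith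
  ultimately have "lam * unit_ball_vol (DIM('a)) / 3^DIM('a) / 24 \<le> LK K (\<lambda>y. ell_powr \<alpha> (norm y - r)) x"
    using lam \<alpha> A r x K(2) \<open>x \<in> \<Omega>\<close> \<open>A < - ln (norm x - r)\<close> measurable_kernel_slice[OF K(1) \<open>x \<in> \<Omega>\<close>]
    by (intro LK_phi_ge) auto
  then show ?thesis by (simp add: ell_powr_def)
qed

theorem lemma4p17:
  fixes lam Lam :: real
  assumes "0 < lam" and "lam \<le> Lam"
  shows "\<exists>\<alpha> r0 \<delta>. \<alpha> \<in> {0<..<1} \<and> r0 \<in> {0<..<1} \<and> \<delta> \<in> {0<..<1} \<and>
    (\<forall>(r::real) (\<Omega>::'a::euclidean_space set) (K::'a \<Rightarrow> 'a \<Rightarrow> real).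
       0 < r \<and> r \<le> r0 \<and>
       ball 0 (r + r^2) - cball 0 r \<subseteq> \<Omega> \<and>
       (\<lambda>p. K (fst p) (snd p)) \<in> borel_measurable (restrict_space (lborel \<Otimes>\<^sub>M lborel) (\<Omega> \<times> ball 0 1)) \<and>
       (\<forall>x\<in>\<Omega>. \<forall>z\<in>ball 0 1. lam \<le> K x z \<and> K x z \<le> Lam)
       \<longrightarrow> (\<forall>x\<in>ball 0 (r + r^2). norm x > r \<longrightarrow>
              LK K (\<lambda>y. ell (max (norm y - r) 0) powr \<alpha>) x \<ge> \<delta>))"
proof -
  define N where "N = DIM('a)"
  define \<alpha> where "\<alpha> = min (1/4) (lam / (1536 * Lam * 6^N))"
  define A where "A = max 8 (96 * Lam * 6^N / lam)"
  define \<delta> where "\<delta> = min (1/2) (lam * unit_ball_vol N / 3^N / 24)"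
  have "0 < 1536 * Lam * 6^N" using assms by simp
  moreover have "\<alpha> \<le> lam / (1536 * Lam * 6^N)" by (simp add: \<alpha>_def)
  ultimately have \<alpha>: "0 < \<alpha>" "\<alpha> \<le> 1/4" "\<alpha> * (1536 * Lam * 6^DIM('a)) \<le> lam"
    using assms by (simp_all add: \<alpha>_def le_divide_eq N_def)
  have "exp (- A / 2) < 1" "0 < \<delta>" "\<delta> < 1" using assms by (auto simp: A_def \<delta>_def)
  moreover have "\<delta> \<le> LK K (\<lambda>y. ell (max (norm y - r) 0) powr \<alpha>) x"
    if "0 < r" "r \<le> exp (- A / 2)" "ball 0 (r + r^2) - cball 0 r \<subseteq> \<Omega>"
      "(\<lambda>p. K (fst p) (snd p)) \<in> borel_measurable (restrict_space (lborel \<Otimes>\<^sub>M lborel) (\<Omega> \<times> ball 0 1))"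
      "\<forall>x\<in>\<Omega>. \<forall>z\<in>ball 0 1. lam \<le> K x z \<and> K x z \<le> Lam"
      "x \<in> ball 0 (r + r^2)" "r < norm x"
    for r \<Omega> K and x :: 'a
  proof -
    have "8 \<le> A" "96 * Lam * 6^DIM('a) / lam \<le> A" by (simp_all add: A_def N_def)
    with LK_barrier_lower_bound[OF assms \<alpha>] that
    have "lam * unit_ball_vol (DIM('a)) / 3^DIM('a) / 24 \<le> LK K (\<lambda>y. ell (max (norm y - r) 0) powr \<alpha>) x"
      by blast
    then show ?thesis by (simp add: \<delta>_def N_def)
  qed
  ultimately show ?thesis
    using \<alpha> by - (rule exI[of _ \<alpha>], rule exI[of _ "exp (- A / 2)"], rule exI[of _ \<delta>], auto)
qed

end
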